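(* Let $r\geq 2$ and $0\leq \alpha\leq 1-\frac{1}{r}$. Let $G$ be a graph on $n$ vertices with minimum degree $\delta=\delta(G)$, let $\mathbf{x}=(x_{1}, \dots, x_{n})$ be a non-negative unit eigenvector of $A_{\alpha}(G)$ corresponding to $\lambda_{\alpha}(G)$, and let $x=\min \{x_{1}, \dots, x_{n}\}$. If $x>0$, then $$\lambda_{\alpha}(G)\leq \alpha \delta+ (1-\alpha)\sqrt{\delta^2+\left(\frac{1}{nx^2}-1\right)n\delta}.$$
   Context: $A_\alpha(G)=\alpha D(G)+(1-\alpha)A(G)$, where $A(G)$ is the adjacency matrix and $D(G)$ the diagonal degree matrix; $\lambda_\alpha(G)$ is its largest eigenvalue. *)

theory Defs
  imports Complex_Main
begin

definition simple_graph :: "nat \<Rightarrow> (nat \<Rightarrow> nat \<Rightarrow> bool) \<Rightarrow> bool" where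
  "simple_graph n E \<longleftrightarrow> (\<forall>i j. E i j \<longrightarrow> i < n \<and> j < n) \<and> (\<forall>i j. E i j \<longrightarrow> E j i) \<and> (\<forall>i. \<not> E i i)"

definition degree :: "nat \<Rightarrow> (nat \<Rightarrow> nat \<Rightarrow> bool) \<Rightarrow> nat \<Rightarrow> nat" where
  "degree n E i = card {j. j < n \<and> E i j}"

definition min_degree :: "nat \<Rightarrow> (nat \<Rightarrow> nat \<Rightarrow> bool) \<Rightarrow> nat" where
  "min_degree n E = Min (degree n E ` {..<n})"

definition A_alpha :: "real \<Rightarrow> nat \<Rightarrow> (nat \<Rightarrow> nat \<Rightarrow> bool) \<Rightarrow> nat \<Rightarrow> nat \<Rightarrow> real" where
  "A_alpha \<alpha> n E i j =
     (if i = j then \<alpha> * real (degree n E i) else 0) + (1 - \<alpha>) * (if E i j then 1 else 0)"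

definition is_eigenpair :: "nat \<Rightarrow> (nat \<Rightarrow> nat \<Rightarrow> real) \<Rightarrow> real \<Rightarrow> (nat \<Rightarrow> real) \<Rightarrow> bool" where
  "is_eigenpair n M \<mu> v \<longleftrightarrow> (\<exists>i<n. v i \<noteq> 0) \<and> (\<forall>i<n. (\<Sum>j<n. M i j * v j) = \<mu> * v i)"

definition is_eigenvalue :: "nat \<Rightarrow> (nat \<Rightarrow> nat \<Rightarrow> real) \<Rightarrow> real \<Rightarrow> bool" where
  "is_eigenvalue n M \<mu> \<longleftrightarrow> (\<exists>v. is_eigenpair n M \<mu> v)"

definition lambda_alpha :: "real \<Rightarrow> nat \<Rightarrow> (nat \<Rightarrow> nat \<Rightarrow> bool) \<Rightarrow> real" where
  "lambda_alpha \<alpha> n E = Max {\<mu>. is_eigenvalue n (A_alpha \<alpha> n E) \<mu>}"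

end

theory Submission
  imports Defs "HOL-Analysis.Convex"
begin

(* Evaluate the eigenvalue equation at a vertex u of minimum degree \<delta>:
   (\<lambda> - \<alpha> \<delta>) x(u) = (1 - \<alpha>) S, where S is the sum of x over the neighbours of u.
   By Cauchy-Schwarz S\<^sup>2 is at most \<delta> times the squared mass of x on the neighbourhood,
   and that mass is at most 1 - (n - \<delta>) x\<^sup>2, since every other vertex carries at least x\<^sup>2.
   Hence S \<le> x sqrt(\<delta>\<^sup>2 + (1/(n x\<^sup>2) - 1) n \<delta>) \<le> x(u) sqrt(...), and dividing by x(u) > 0
   gives the bound. *)

definition neighbours :: "nat \<Rightarrow> (nat \<Rightarrow> nat \<Rightarrow> bool) \<Rightarrow> nat \<Rightarrow> nat set" where
  "neighbours n E i = {j. j < n \<and> E i j}"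

lemma neighbours_subset: "neighbours n E i \<subseteq> {..<n}"
  unfolding neighbours_def by auto

lemma card_neighbours: "card (neighbours n E i) = degree n E i"
  unfolding neighbours_def degree_def ..

lemma A_alpha_mult_vec:
  assumes "i < n"
  shows "(\<Sum>j<n. A_alpha \<alpha> n E i j * v j)
           = \<alpha> * real (degree n E i) * v i + (1 - \<alpha>) * (\<Sum>j\<in>neighbours n E i. v j)"
proof -
  have "(\<Sum>j<n. A_alpha \<alpha> n E i j * v j)
      = (\<Sum>j<n. if i = j then \<alpha> * real (degree n E i) * v j else 0)
        + (1 - \<alpha>) * (\<Sum>j<n. if E i j then v j else 0)"
  proof -
    have "A_alpha \<alpha> n E i j * v j
        = (if i = j then \<alpha> * real (degree n E i) * v j else 0) + (1 - \<alpha>) * (if E i j then v j else 0)"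
      for j unfolding A_alpha_def by (simp add: algebra_simps)
    then show ?thesis by (simp add: sum.distrib sum_distrib_left)
  qed
  also have "\<dots> = \<alpha> * real (degree n E i) * v i + (1 - \<alpha>) * (\<Sum>j\<in>neighbours n E i. v j)"
    using assms unfolding neighbours_def by (simp add: sum.If_cases Int_def conj_commute)
  finally show ?thesis .
qed

lemma eigenvalue_le_of_neighbour_sum_le:
  assumes "is_eigenpair n (A_alpha \<alpha> n E) \<mu> v" and "\<alpha> < 1"
    and "i < n" and "v i > 0"
    and "(\<Sum>j\<in>neighbours n E i. v j) \<le> c * v i"
  shows "\<mu> \<le> \<alpha> * real (degree n E i) + (1 - \<alpha>) * c"
proof -
  have "\<mu> * v i = \<alpha> * real (degree n E i) * v i + (1 - \<alpha>) * (\<Sum>j\<in>neighbours n E i. v j)"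
    using assms(1,3) A_alpha_mult_vec[OF assms(3)] unfolding is_eigenpair_def by metis
  also have "\<dots> \<le> \<alpha> * real (degree n E i) * v i + (1 - \<alpha>) * (c * v i)"
    using assms(2,5) by simp
  finally have "\<mu> * v i \<le> (\<alpha> * real (degree n E i) + (1 - \<alpha>) * c) * v i"
    by (simp add: algebra_simps)
  then show ?thesis using assms(4) by simp
qed

lemma sum_squares_subset_le:
  fixes x :: "'a \<Rightarrow> real"
  assumes "finite A" and "B \<subseteq> A" and "\<forall>i\<in>A. m \<le> x i" and "0 \<le> m"
  shows "(\<Sum>i\<in>B. (x i)\<^sup>2) + (real (card A) - real (card B)) * m\<^sup>2 \<le> (\<Sum>i\<in>A. (x i)\<^sup>2)"
proof -
  have "(real (card A) - real (card B)) * m\<^sup>2 = (\<Sum>i\<in>A - B. m\<^sup>2)"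
    using assms(1,2) by (simp add: card_Diff_subset finite_subset card_mono of_nat_diff)
  also have "\<dots> \<le> (\<Sum>i\<in>A - B. (x i)\<^sup>2)"
    using assms(3,4) by (intro sum_mono power_mono) auto
  finally show ?thesis
    using sum.subset_diff[OF assms(2,1), of "\<lambda>i. (x i)\<^sup>2"] by linarith
qed

lemma unit_vector_subset_sum_le:
  fixes x :: "'a \<Rightarrow> real"
  assumes "finite V" and "(\<Sum>i\<in>V. (x i)\<^sup>2) = 1" and "\<forall>i\<in>V. m \<le> x i" and "0 < m"
    and "N \<subseteq> V" and "m \<le> y"
  shows "(\<Sum>j\<in>N. x j)
           \<le> sqrt ((real (card N))\<^sup>2 + (1 / (real (card V) * m\<^sup>2) - 1) * real (card V) * real (card N)) * y"
proof -
  define d where "d = real (card N)"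
  define T where "T = d\<^sup>2 + (1 / (real (card V) * m\<^sup>2) - 1) * real (card V) * d"
  have "(\<Sum>j\<in>N. x j)\<^sup>2 \<le> (\<Sum>j\<in>N. (x j)\<^sup>2) * d"
    unfolding d_def by (rule sum_squared_le_sum_of_squares)
  also have "\<dots> \<le> (1 - (real (card V) - d) * m\<^sup>2) * d"
    using sum_squares_subset_le[OF assms(1,5,3)] assms(2,4) unfolding d_def
    by (intro mult_right_mono) auto
  also have "\<dots> = T * m\<^sup>2"
  proof (cases "card V = 0")
    case True
    then have "d = 0" using assms(1,5) card_mono unfolding d_def by fastforce
    then show ?thesis unfolding T_def by simp
  next
    case False
    then show ?thesis using assms(4) unfolding T_def by (simp add: field_simps power2_eq_square)
  qed
  finally have bound: "(\<Sum>j\<in>N. x j)\<^sup>2 \<le> T * m\<^sup>2" .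
  then have "0 \<le> T * m\<^sup>2" by (meson order_trans zero_le_power2)
  then have "0 \<le> T" using assms(4) by (simp add: zero_le_mult_iff)
  from bound have "\<bar>\<Sum>j\<in>N. x j\<bar> \<le> sqrt T * m"
    using real_sqrt_le_mono assms(4) by (fastforce simp: real_sqrt_mult)
  also have "\<dots> \<le> sqrt T * y"
    using \<open>0 \<le> T\<close> assms(6) by (intro mult_left_mono) auto
  finally show ?thesis unfolding T_def d_def by simp
qed

theorem lemma4p1:
  fixes r :: nat and \<alpha> :: real and n :: nat and E :: "nat \<Rightarrow> nat \<Rightarrow> bool" and x :: "nat \<Rightarrow> real"
  assumes "r \<ge> 2"
    and "0 \<le> \<alpha>" and "\<alpha> \<le> 1 - 1 / real r"
    and "simple_graph n E"
    and "\<forall>i<n. x i \<ge> 0"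
    and "(\<Sum>i<n. (x i)\<^sup>2) = 1"
    and "is_eigenpair n (A_alpha \<alpha> n E) (lambda_alpha \<alpha> n E) x"
    and "Min (x ` {..<n}) > 0"
  shows "lambda_alpha \<alpha> n E
           \<le> \<alpha> * real (min_degree n E)
             + (1 - \<alpha>) * sqrt ((real (min_degree n E))\<^sup>2
                 + (1 / (real n * (Min (x ` {..<n}))\<^sup>2) - 1) * real n * real (min_degree n E))"
proof -
  define m where "m = Min (x ` {..<n})"
  define T where "T = (real (min_degree n E))\<^sup>2 + (1 / (real n * m\<^sup>2) - 1) * real n * real (min_degree n E)"
  have "n > 0" using assms(7) unfolding is_eigenpair_def by auto
  have x_ge_m: "\<forall>i<n. m \<le> x i" unfolding m_def by simp
  obtain u where u: "u < n" "degree n E u = min_degree n E"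
    using Min_in[of "degree n E ` {..<n}"] \<open>n > 0\<close> unfolding min_degree_def by fastforce
  have "1 / real r > 0" using assms(1) by simp
  then have "\<alpha> < 1" using assms(3) by linarith
  have "(\<Sum>j\<in>neighbours n E u. x j) \<le> sqrt T * x u"
    using unit_vector_subset_sum_le[of "{..<n}" x m "neighbours n E u" "x u"] assms(6,8) x_ge_m u(1)
    unfolding T_def m_def by (simp add: neighbours_subset card_neighbours u(2))
  then show ?thesis
    using eigenvalue_le_of_neighbour_sum_le[OF assms(7) \<open>\<alpha> < 1\<close> u(1)] assms(8) x_ge_m u
    unfolding T_def m_def by fastforce
qed

end
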